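(* Let $R$ be an associative ring with identity and $a,b,c,d\in R$ such that both $a^{\|(b,c)}$ and $d^{\|(b,c)}$ exist. Then the following are equivalent: (i) $a^{\|(b,c)}a=dd^{\|(b,c)}$; (ii) $a^{\|(b,c)}dd^{\|(b,c)}a=dd^{\|(b,c)}aa^{\|(b,c)}$; (iii) $d^{\|(b,c)}da^{\|(b,c)}a=da^{\|(b,c)}ad^{\|(b,c)}$; (iv) $a^{\|(b,c)}=dd^{\|(b,c)}a^{\|(b,c)}$ and $d^{\|(b,c)}=d^{\|(b,c)}a^{\|(b,c)}a$; (v) $a^{\|(b,c)}ad^{\|(b,c)}=d^{\|(b,c)}a^{\|(b,c)}a$ and $a^{\|(b,c)}dd^{\|(b,c)}=dd^{\|(b,c)}a^{\|(b,c)}$. Moreover, if any of these holds, then $ad$ has a $(b,c)$-inverse and $(ad)^{\|(b,c)}=d^{\|(b,c)}a^{\|(b,c)}$.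
   Context: For $a,b,c\in R$, $a$ is $(b,c)$-invertible if there exists $y\in R$ with $y\in (bRy)\cap(yRc)$, $yab=b$ and $cay=c$; such $y$ is unique and denoted $a^{\|(b,c)}$. *)

theory Defs
  imports Main
begin

definition is_bc_inverse :: "'a::ring_1 \<Rightarrow> 'a \<Rightarrow> 'a \<Rightarrow> 'a \<Rightarrow> bool" where
  "is_bc_inverse a b c y \<longleftrightarrow>
     (\<exists>r. y = b * r * y) \<and> (\<exists>s. y = y * s * c) \<and> y * a * b = b \<and> c * a * y = c"

definition bc_invertible :: "'a::ring_1 \<Rightarrow> 'a \<Rightarrow> 'a \<Rightarrow> bool" where
  "bc_invertible a b c \<longleftrightarrow> (\<exists>y. is_bc_inverse a b c y)"

definition bc_inv :: "'a::ring_1 \<Rightarrow> 'a \<Rightarrow> 'a \<Rightarrow> 'a" where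
  "bc_inv a b c = (THE y. is_bc_inverse a b c y)"

end

theory Submission
  imports Defs
begin

text \<open>A (b,c)-inverse y of a lies in bR \<inter> Rc, and ya, ay act as the identity on bR and Rc
  respectively. Hence any two (b,c)-inverses y of a and z of d absorb each other:
  yaz = z, zay = z, and symmetrically. With these absorption laws each of (ii)--(v) collapses
  to (i), and under (i) the element zy satisfies the defining equations of a (b,c)-inverse
  of ad, since zyadb = zdzdb = b and cadzy = cayay = c.\<close>

lemma is_bc_inverse_left_absorb:
  assumes "is_bc_inverse a b c y" and "is_bc_inverse d b c z"
  shows "y * a * z = z"
proof -
  from assms obtain r where z: "z = b * r * z" and yab: "y * a * b = b"
    unfolding is_bc_inverse_def by blast
  have "y * a * z = (y * a * b) * r * z" using z by (metis mult.assoc)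
  with yab z show ?thesis by simp
qed

lemma is_bc_inverse_right_absorb:
  assumes "is_bc_inverse a b c y" and "is_bc_inverse d b c z"
  shows "z * a * y = z"
proof -
  from assms obtain s where z: "z = z * s * c" and cay: "c * a * y = c"
    unfolding is_bc_inverse_def by blast
  have "z * a * y = z * s * (c * a * y)" using z by (metis mult.assoc)
  with cay z show ?thesis by simp
qed

lemma is_bc_inverse_unique:
  assumes "is_bc_inverse a b c y" and "is_bc_inverse a b c z"
  shows "y = z"
  using is_bc_inverse_left_absorb[OF assms] is_bc_inverse_right_absorb[OF assms(2,1)]
  by simp

lemma bc_inv_eqI:
  assumes "is_bc_inverse a b c y"
  shows "bc_inv a b c = y"
  unfolding bc_inv_def using assms is_bc_inverse_unique by blast

lemma is_bc_inverse_bc_inv: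
  assumes "bc_invertible a b c"
  shows "is_bc_inverse a b c (bc_inv a b c)"
  using assms bc_inv_eqI unfolding bc_invertible_def by metis

lemma is_bc_inverse_mult:
  assumes y: "is_bc_inverse a b c y" and z: "is_bc_inverse d b c z" and yz: "y * a = d * z"
  shows "is_bc_inverse (a * d) b c (z * y)"
proof -
  from y z obtain r s where r: "z = b * r * z" and s: "y = y * s * c"
    and dzb: "z * d * b = b" and cay: "c * a * y = c"
    unfolding is_bc_inverse_def by blast
  have zdz: "z * d * z = z" using is_bc_inverse_left_absorb[OF z z] .
  have "z * y * (a * d) * b = z * (y * a) * d * b" by (simp add: mult.assoc)
  also have "\<dots> = z * d * z * d * b" using yz by (simp add: mult.assoc)
  also have "\<dots> = b" using zdz dzb by simp
  finally have left: "z * y * (a * d) * b = b" .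
  have "c * (a * d) * (z * y) = c * a * (d * z) * y" by (simp add: mult.assoc)
  also have "\<dots> = c * a * y * a * y" using yz by (simp add: mult.assoc)
  also have "\<dots> = c" using cay by (simp add: mult.assoc)
  finally have right: "c * (a * d) * (z * y) = c" .
  have "z * y = b * r * (z * y)" and "z * y = (z * y) * s * c"
    using r s by (metis mult.assoc)+
  with left right show ?thesis unfolding is_bc_inverse_def by blast
qed

context
  fixes a b c d y z :: "'a::ring_1"
  assumes y: "is_bc_inverse a b c y" and z: "is_bc_inverse d b c z"
begin

lemma bc_idempotents_eq_iff_cross:
  "y * d * z * a = d * z * a * y \<longleftrightarrow> y * a = d * z"
proof -
  have "y * d * z = y" using is_bc_inverse_right_absorb[OF z y] .
  moreover have "d * z * a * y = d * z"
    using is_bc_inverse_right_absorb[OF y z] by (simp add: mult.assoc)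
  ultimately show ?thesis by simp
qed

lemma bc_idempotents_eq_iff_swapped:
  "z * d * y * a = d * y * a * z \<longleftrightarrow> y * a = d * z"
proof -
  have "z * d * y * a = y * a"
    using is_bc_inverse_left_absorb[OF z y] by simp
  moreover have "d * y * a * z = d * z"
    using is_bc_inverse_left_absorb[OF y z] by (simp add: mult.assoc)
  ultimately show ?thesis by simp
qed

lemma bc_idempotents_eq_iff_absorb:
  "y * a = d * z \<longleftrightarrow> y = d * z * y \<and> z = z * y * a"
proof
  assume eq: "y * a = d * z"
  have "y * a * y = y" and "z * d * z = z"
    using is_bc_inverse_left_absorb[OF y y] is_bc_inverse_left_absorb[OF z z] .
  with eq show "y = d * z * y \<and> z = z * y * a" by (metis mult.assoc)
next
  assume "y = d * z * y \<and> z = z * y * a"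
  then have "y * a = d * z * (y * a)" and "d * z = d * z * (y * a)"
    by (metis mult.assoc)+
  then show "y * a = d * z" by simp
qed

lemma bc_idempotents_eq_iff_commute:
  "y * a * z = z * y * a \<and> y * d * z = d * z * y \<longleftrightarrow> y * a = d * z"
  using is_bc_inverse_left_absorb[OF y z] is_bc_inverse_right_absorb[OF z y]
    bc_idempotents_eq_iff_absorb
  by auto

end

theorem theorem4p5:
  fixes a b c d :: "'a::ring_1"
  assumes "bc_invertible a b c" and "bc_invertible d b c"
  shows "let ai = bc_inv a b c; di = bc_inv d b c;
             P1 = (ai * a = d * di);
             P2 = (ai * d * di * a = d * di * a * ai);
             P3 = (di * d * ai * a = d * ai * a * di);
             P4 = (ai = d * di * ai \<and> di = di * ai * a);
             P5 = (ai * a * di = di * ai * a \<and> ai * d * di = d * di * ai)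
         in (P1 \<longleftrightarrow> P2) \<and> (P1 \<longleftrightarrow> P3) \<and> (P1 \<longleftrightarrow> P4) \<and> (P1 \<longleftrightarrow> P5) \<and>
            (P1 \<longrightarrow> bc_invertible (a * d) b c \<and> bc_inv (a * d) b c = di * ai)"
proof -
  define ai where "ai = bc_inv a b c"
  define di where "di = bc_inv d b c"
  have A: "is_bc_inverse a b c ai" and D: "is_bc_inverse d b c di"
    unfolding ai_def di_def using assms by (simp_all add: is_bc_inverse_bc_inv)
  have product: "bc_invertible (a * d) b c \<and> bc_inv (a * d) b c = di * ai"
    if "ai * a = d * di"
    using is_bc_inverse_mult[OF A D that] bc_inv_eqI
    unfolding bc_invertible_def by blast
  show ?thesis
    unfolding Let_def ai_def[symmetric] di_def[symmetric]
    using bc_idempotents_eq_iff_cross[OF A D] bc_idempotents_eq_iff_swapped[OF A D]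
      bc_idempotents_eq_iff_absorb[OF A D] bc_idempotents_eq_iff_commute[OF A D] product
    by blast
qed

end
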